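(* The Gaussian lattice $\Lambda_{1,6}$ has a $\mathcal G$-basis $e_1,\dots,e_7$ indexed by the nodes of the $E_7$ Coxeter diagram such that $h(e_j,e_j)=-2$, $h(e_j,e_k)=1+i$ and $h(e_k,e_j)=1-i$ whenever $j<k$ are joined in the diagram, and $h(e_j,e_k)=0$ when $j\ne k$ are not joined.
   Context: Let $\mathcal G=\mathbb Z[i]$. $\Lambda_{1,6}=\mathcal G^7$ with Hermitian form $h(x,y)=\bar x^tHy$, $H=\begin{pmatrix}-2&1+i\\1-i&-2\end{pmatrix}^{\oplus3}\oplus(2)$ (block diagonal). The $E_7$ Coxeter diagram has nodes $1,\dots,7$, with edges $1\!-\!2,\ 2\!-\!3,\ 3\!-\!4,\ 4\!-\!5,\ 5\!-\!6$ and $3\!-\!7$. *)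

theory Defs
  imports Complex_Main
begin

definition gauss_ints :: "complex set" where
  "gauss_ints = {z. Re z \<in> \<int> \<and> Im z \<in> \<int>}"

text \<open>Vectors of C^7 are modelled as functions nat => complex with coordinates
  indexed by 1..7 and vanishing outside {1..7}.  The lattice Lambda_{1,6} = G^7.\<close>
definition vec7 :: "(nat \<Rightarrow> complex) set" where
  "vec7 = {x. \<forall>i. i \<notin> {1..7} \<longrightarrow> x i = 0}"

definition Lambda16 :: "(nat \<Rightarrow> complex) set" where
  "Lambda16 = {x. x \<in> vec7 \<and> (\<forall>i\<in>{1..7}. x i \<in> gauss_ints)}"

text \<open>The Gram matrix H = [[-2,1+i],[1-i,-2]]^(+3) (+) (2), 1-indexed.\<close>
definition Hmat :: "nat \<Rightarrow> nat \<Rightarrow> complex" where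
  "Hmat j k =
     (if j = k \<and> j \<in> {1..6} then -2
      else if j = 7 \<and> k = 7 then 2
      else if (j, k) \<in> {(1,2),(3,4),(5,6)} then 1 + \<i>
      else if (j, k) \<in> {(2,1),(4,3),(6,5)} then 1 - \<i>
      else 0)"

definition herm :: "(nat \<Rightarrow> complex) \<Rightarrow> (nat \<Rightarrow> complex) \<Rightarrow> complex" where
  "herm x y = (\<Sum>j\<in>{1..7}. \<Sum>k\<in>{1..7}. cnj (x j) * Hmat j k * y k)"

definition G_basis :: "(nat \<Rightarrow> nat \<Rightarrow> complex) \<Rightarrow> bool" where
  "G_basis e \<longleftrightarrow> (\<forall>j\<in>{1..7}. e j \<in> Lambda16) \<and>
     (\<forall>x\<in>Lambda16. \<exists>!c. (\<forall>j\<in>{1..7}. c j \<in> gauss_ints) \<and> (\<forall>j. j \<notin> {1..7} \<longrightarrow> c j = 0) \<and>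
         x = (\<lambda>i. \<Sum>j\<in>{1..7}. c j * e j i))"

definition E7_joined :: "nat \<Rightarrow> nat \<Rightarrow> bool" where
  "E7_joined j k \<longleftrightarrow> {j, k} \<in> {{1,2},{2,3},{3,4},{4,5},{5,6},{3,7}}"

end

theory Submission
  imports Defs
begin

text \<open>They form a \<open>\<G>\<close>-basis of \<open>\<G>\<^sup>7\<close> because they admit a dual basis
  with Gaussian-integer entries (equivalently, the matrix with rows \<open>e\<^sub>j\<close> is invertible
  over \<open>\<G>\<close>): pairing with the dual basis yields integral coordinates, and it is unique.\<close>

lemma gauss_ints_add: "a \<in> gauss_ints \<Longrightarrow> b \<in> gauss_ints \<Longrightarrow> a + b \<in> gauss_ints"
  by (simp add: gauss_ints_def)

lemma gauss_ints_mult: "a \<in> gauss_ints \<Longrightarrow> b \<in> gauss_ints \<Longrightarrow> a * b \<in> gauss_ints"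
  by (simp add: gauss_ints_def)

lemma gauss_ints_sum: "(\<And>i. i \<in> A \<Longrightarrow> f i \<in> gauss_ints) \<Longrightarrow> sum f A \<in> gauss_ints"
  by (induction A rule: infinite_finite_induct) (auto intro: gauss_ints_add simp: gauss_ints_def)

lemma sum_atLeastAtMost_1_7:
  "(\<Sum>j\<in>{1..7::nat}. f j) = f 1 + f 2 + f 3 + f 4 + f 5 + f 6 + f 7"
  by (simp add: numeral_eq_Suc atLeastAtMostSuc_conv add.commute add.left_commute)

lemma ball_atLeastAtMost_1_7:
  "(\<forall>j\<in>{1..7::nat}. P j) \<longleftrightarrow> P 1 \<and> P 2 \<and> P 3 \<and> P 4 \<and> P 5 \<and> P 6 \<and> P 7"
proof -
  have "{1..7::nat} = {1,2,3,4,5,6,7}" by auto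
  then show ?thesis by simp
qed

lemma G_basis_if_integral_dual_basis:
  fixes e f :: "nat \<Rightarrow> nat \<Rightarrow> complex"
  assumes e_lattice: "\<forall>j\<in>{1..7}. e j \<in> Lambda16"
    and f_gauss: "\<forall>j\<in>{1..7}. \<forall>i\<in>{1..7}. f j i \<in> gauss_ints"
    and dual_complete: "\<forall>i\<in>{1..7}. \<forall>l\<in>{1..7}. (\<Sum>j\<in>{1..7}. e j i * f j l) = (if i = l then 1 else 0)"
    and dual_pairing: "\<forall>j\<in>{1..7}. \<forall>k\<in>{1..7}. (\<Sum>i\<in>{1..7}. f j i * e k i) = (if j = k then 1 else 0)"
  shows "G_basis e"
  unfolding G_basis_def
proof (intro conjI ballI)
  fix x assume x: "x \<in> Lambda16"
  let ?coords = "\<lambda>c. (\<forall>j\<in>{1..7}. c j \<in> gauss_ints) \<and> (\<forall>j. j \<notin> {1..7} \<longrightarrow> c j = 0) \<and>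
                      x = (\<lambda>i. \<Sum>j\<in>{1..7}. c j * e j i)"
  have e_outside: "e j i = 0" if "j \<in> {1..7}" "i \<notin> {1..7}" for j i
    using e_lattice that by (auto simp: Lambda16_def vec7_def)
  define c where "c j = (if j \<in> {1..7} then \<Sum>i\<in>{1..7}. f j i * x i else 0)" for j
  have represents: "x i = (\<Sum>j\<in>{1..7}. c j * e j i)" for i
  proof (cases "i \<in> {1..7}")
    case False
    then show ?thesis using x e_outside by (simp add: Lambda16_def vec7_def)
  next
    case True
    have "(\<Sum>j\<in>{1..7}. c j * e j i) = (\<Sum>j\<in>{1..7}. \<Sum>l\<in>{1..7}. x l * (e j i * f j l))"
      by (auto simp: c_def sum_distrib_right sum_distrib_left mult_ac intro!: sum.cong)
    also have "\<dots> = (\<Sum>l\<in>{1..7}. x l * (\<Sum>j\<in>{1..7}. e j i * f j l))"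
      by (subst sum.swap) (simp add: sum_distrib_left)
    also have "\<dots> = (\<Sum>l\<in>{1..7}. if i = l then x l else 0)"
      using dual_complete True by (intro sum.cong) auto
    also have "\<dots> = x i"
      using True by simp
    finally show ?thesis by simp
  qed
  have "?coords c"
  proof (intro conjI)
    show "x = (\<lambda>i. \<Sum>j\<in>{1..7}. c j * e j i)"
      using represents by blast
  qed (use x f_gauss in \<open>auto simp: c_def Lambda16_def intro!: gauss_ints_sum gauss_ints_mult\<close>)
  moreover have "d = c" if d: "?coords d" for d
  proof
    fix j show "d j = c j"
    proof (cases "j \<in> {1..7}")
      case True
      have "c j = (\<Sum>k\<in>{1..7}. d k * (\<Sum>i\<in>{1..7}. f j i * e k i))"
        using True d by (simp add: c_def sum_distrib_left mult_ac) (subst sum.swap, simp)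
      also have "\<dots> = (\<Sum>k\<in>{1..7}. if j = k then d k else 0)"
        using dual_pairing True by (intro sum.cong) auto
      also have "\<dots> = d j"
        using True by simp
      finally show ?thesis by simp
    qed (use d in \<open>auto simp: c_def\<close>)
  qed
  ultimately show "\<exists>!c. ?coords c" by blast
qed (use e_lattice in blast)

definition E7_basis_rows :: "complex list list" where
  "E7_basis_rows =
    [[ 1,  1,  0,  0,  1,  1, -1],
     [-\<i>,  0,  \<i>,  \<i>,  0,  0, -1],
     [ 0,  0, -\<i>,  0,  0,  0,  0],
     [ 0,  0, -1, -1,  \<i>,  \<i>, -\<i>],
     [ \<i>,  0,  0,  0,  0, -\<i>,  1],
     [ 0,  0,  0,  0, -\<i>, -1,  0],
     [ 0,  0,  \<i>,  1,  0,  0,  0]]"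

definition E7_dual_basis_rows :: "complex list list" where
  "E7_dual_basis_rows =
    [[ 0,       1,       0,  0,  0,       0,      0],
     [-1,       1,       0,  0, -1,       \<i>,     -1 + \<i>],
     [-2,       1 + \<i>,  \<i>,  1, -1 + \<i>,  1 + \<i>, -1 + 3 * \<i>],
     [-1,       1 + \<i>,  0,  0,  0,       0,      \<i>],
     [-1 - \<i>,  1 + \<i>,  0,  0, -1,       \<i>,     -1 + \<i>],
     [-1,       1,       0,  0,  \<i>,       0,      \<i>],
     [-1 + \<i>,  1,       0,  1,  \<i>,       1,      1 + 2 * \<i>]]"

definition E7_basis :: "nat \<Rightarrow> nat \<Rightarrow> complex" where
  "E7_basis j i = (if j \<in> {1..7} \<and> i \<in> {1..7} then E7_basis_rows ! (j - 1) ! (i - 1) else 0)"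

definition E7_dual_basis :: "nat \<Rightarrow> nat \<Rightarrow> complex" where
  "E7_dual_basis j i =
     (if j \<in> {1..7} \<and> i \<in> {1..7} then E7_dual_basis_rows ! (j - 1) ! (i - 1) else 0)"

lemma E7_joined_iff:
  "E7_joined j k \<longleftrightarrow>
     (j, k) \<in> {(1,2),(2,1),(2,3),(3,2),(3,4),(4,3),(4,5),(5,4),(5,6),(6,5),(3,7),(7,3)}"
  unfolding E7_joined_def by (auto simp: doubleton_eq_iff)

lemma E7_basis_in_Lambda16: "\<forall>j\<in>{1..7}. E7_basis j \<in> Lambda16"
proof -
  have "\<forall>j\<in>{1..7}. \<forall>i\<in>{1..7}. E7_basis j i \<in> gauss_ints"
    unfolding ball_atLeastAtMost_1_7 by (simp add: E7_basis_def E7_basis_rows_def gauss_ints_def)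
  then show ?thesis by (auto simp: Lambda16_def vec7_def E7_basis_def)
qed

lemma E7_dual_basis_gauss: "\<forall>j\<in>{1..7}. \<forall>i\<in>{1..7}. E7_dual_basis j i \<in> gauss_ints"
  unfolding ball_atLeastAtMost_1_7
  by (simp add: E7_dual_basis_def E7_dual_basis_rows_def gauss_ints_def)

lemma E7_basis_dual_complete:
  "\<forall>i\<in>{1..7}. \<forall>l\<in>{1..7}.
     (\<Sum>j\<in>{1..7}. E7_basis j i * E7_dual_basis j l) = (if i = l then 1 else 0)"
  unfolding ball_atLeastAtMost_1_7 sum_atLeastAtMost_1_7
  by (simp add: E7_basis_def E7_dual_basis_def E7_basis_rows_def E7_dual_basis_rows_def
      complex_eq_iff)

lemma E7_basis_dual_pairing:
  "\<forall>j\<in>{1..7}. \<forall>k\<in>{1..7}.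
     (\<Sum>i\<in>{1..7}. E7_dual_basis j i * E7_basis k i) = (if j = k then 1 else 0)"
  unfolding ball_atLeastAtMost_1_7 sum_atLeastAtMost_1_7
  by (simp add: E7_basis_def E7_dual_basis_def E7_basis_rows_def E7_dual_basis_rows_def
      complex_eq_iff)

lemma G_basis_E7_basis: "G_basis E7_basis"
  using E7_basis_in_Lambda16 E7_dual_basis_gauss E7_basis_dual_complete E7_basis_dual_pairing
  by (rule G_basis_if_integral_dual_basis)

lemma herm_E7_basis:
  "(\<forall>j\<in>{1..7}. herm (E7_basis j) (E7_basis j) = -2) \<and>
   (\<forall>j\<in>{1..7}. \<forall>k\<in>{1..7}. j < k \<and> E7_joined j k \<longrightarrow>
      herm (E7_basis j) (E7_basis k) = 1 + \<i> \<and> herm (E7_basis k) (E7_basis j) = 1 - \<i>) \<and>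
   (\<forall>j\<in>{1..7}. \<forall>k\<in>{1..7}. j \<noteq> k \<and> \<not> E7_joined j k \<longrightarrow> herm (E7_basis j) (E7_basis k) = 0)"
  unfolding ball_atLeastAtMost_1_7 herm_def sum_atLeastAtMost_1_7
  by (simp add: E7_basis_def E7_basis_rows_def Hmat_def E7_joined_iff complex_eq_iff)

theorem lemma4p14:
  shows "\<exists>e. G_basis e \<and>
    (\<forall>j\<in>{1..7}. herm (e j) (e j) = -2) \<and>
    (\<forall>j\<in>{1..7}. \<forall>k\<in>{1..7}. j < k \<and> E7_joined j k \<longrightarrow>
        herm (e j) (e k) = 1 + \<i> \<and> herm (e k) (e j) = 1 - \<i>) \<and>
    (\<forall>j\<in>{1..7}. \<forall>k\<in>{1..7}. j \<noteq> k \<and> \<not> E7_joined j k \<longrightarrow> herm (e j) (e k) = 0)"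
  using G_basis_E7_basis herm_E7_basis by blast

end
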